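(* Let $\psi$ be the morphism on $\{a,b,c\}$ given by $\psi(a)=aabc$, $\psi(b)=bacaaabc$, $\psi(c)=bacabacabaca$. Then the infinite fixed points $\lim_n\psi^n(a)$ and $\lim_n\psi^n(b)$ of $\psi$ are $7$-automatic.
   Context: For an integer $q\ge 2$, a sequence is $q$-automatic if it is the image under a letter-to-letter map of a fixed point of a morphism all of whose letter-images have length $q$. *)

theory Defs
  imports Main
begin

datatype letter = A | B | C

definition morph_word :: "('a \<Rightarrow> 'a list) \<Rightarrow> 'a list \<Rightarrow> 'a list" where
  "morph_word h u = concat (map h u)"

fun psi :: "letter \<Rightarrow> letter list" where
  "psi A = [A,A,B,C]"
| "psi B = [B,A,C,A,A,A,B,C]"
| "psi C = [B,A,C,A,B,A,C,A,B,A,C,A]"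

definition is_limit_word :: "('a \<Rightarrow> 'a list) \<Rightarrow> 'a \<Rightarrow> (nat \<Rightarrow> 'a) \<Rightarrow> bool" where
  "is_limit_word h x w \<longleftrightarrow>
     (\<forall>n i. i < length ((morph_word h ^^ n) [x]) \<longrightarrow> w i = ((morph_word h ^^ n) [x]) ! i)
     \<and> (\<forall>N. \<exists>n. N < length ((morph_word h ^^ n) [x]))"

text \<open>q-automatic: image under a coding of a fixed point of a q-uniform morphism
  on a finite alphabet (letters coded as natural numbers).  For a q-uniform morphism h,
  the infinite word x is a fixed point (h(x) = x) iff x i = h (x (i div q)) ! (i mod q).\<close>
definition q_automatic :: "nat \<Rightarrow> (nat \<Rightarrow> 'b) \<Rightarrow> bool" where
  "q_automatic q w \<longleftrightarrow>
     (\<exists>(Sig :: nat set) (h :: nat \<Rightarrow> nat list) (x :: nat \<Rightarrow> nat) (tau :: nat \<Rightarrow> 'b).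
        finite Sig
        \<and> (\<forall>s\<in>Sig. length (h s) = q \<and> set (h s) \<subseteq> Sig)
        \<and> (\<forall>i. x i \<in> Sig)
        \<and> (\<forall>i. x i = h (x (i div q)) ! (i mod q))
        \<and> (\<forall>i. w i = tau (x i)))"

end

theory Submission
  imports Defs "HOL-Library.Sublist"
begin

text \<open>The blocks aabc and baca are mapped by psi to concatenations of the same two blocks:
  psi(aabc) = aabc aabc baca aabc baca baca baca and psi(baca) = baca aabc aabc baca baca baca aabc.
  Hence psi, acting on words factored into these blocks, is conjugate to a 7-uniform morphism g
  on the block indices {0,1}, and since psi(a) = aabc and psi(b) = baca aabc, both fixed points
  are the block image of the fixed point of g starting with 0 resp. 1.  Replacing each letter of a
  7-automatic sequence by a block of fixed length 4 keeps it 7-automatic: remember the letter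
  together with the position inside its block.\<close>

lemma morph_word_Nil [simp]: "morph_word h [] = []"
  and morph_word_Cons [simp]: "morph_word h (x # u) = h x @ morph_word h u"
  and morph_word_append [simp]: "morph_word h (u @ v) = morph_word h u @ morph_word h v"
  by (simp_all add: morph_word_def)

lemma funpow_morph_word_append:
  "(morph_word h ^^ n) (u @ v) = (morph_word h ^^ n) u @ (morph_word h ^^ n) v"
  by (induction n) simp_all

lemma length_concat_map_uniform:
  assumes "\<And>s. length (h s) = q"
  shows "length (concat (map h u)) = q * length u"
  using assms by (induction u) simp_all

lemma length_funpow_morph_word_uniform:
  assumes "\<And>s. length (h s) = q"
  shows "length ((morph_word h ^^ n) u) = q ^ n * length u"
  by (induction n) (simp_all add: morph_word_def length_concat_map_uniform[OF assms])

lemma nth_concat_map_uniform: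
  assumes "\<And>s. length (h s) = q" and "i < q * length u"
  shows "concat (map h u) ! i = h (u ! (i div q)) ! (i mod q)"
  using assms(2)
proof (induction u arbitrary: i)
  case Nil
  then show ?case by simp
next
  case (Cons s u)
  show ?case
  proof (cases "i < q")
    case True
    then show ?thesis by (simp add: nth_append assms(1))
  next
    case False
    moreover have "0 < q"
      using Cons.prems by (cases q) simp_all
    moreover have "i - q < q * length u"
      using Cons.prems False by simp
    ultimately show ?thesis
      using Cons.IH[of "i - q"] by (simp add: nth_append assms(1) le_div_geq le_mod_geq)
  qed
qed

lemma funpow_morph_word_conjugate:
  assumes "\<And>s. morph_word h (f s) = concat (map f (g s))"
  shows "(morph_word h ^^ n) (concat (map f u)) = concat (map f ((morph_word g ^^ n) u))"
proof -
  have step: "morph_word h (concat (map f v)) = concat (map f (morph_word g v))" for v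
    by (induction v) (simp_all add: assms)
  show ?thesis
    by (induction n) (simp_all add: step)
qed

lemma prefix_nth: "prefix xs ys \<Longrightarrow> i < length xs \<Longrightarrow> xs ! i = ys ! i"
  by (auto elim: prefixE simp: nth_append)

lemma prefix_morph_word: "prefix u v \<Longrightarrow> prefix (morph_word h u) (morph_word h v)"
  by (auto elim!: prefixE intro: prefixI)

lemma prefix_funpow_morph_word:
  assumes "prefix [s] (g s)" and "n \<le> m"
  shows "prefix ((morph_word g ^^ n) [s]) ((morph_word g ^^ m) [s])"
proof -
  have suc: "prefix ((morph_word g ^^ k) [s]) ((morph_word g ^^ Suc k) [s])" for k
  proof (induction k)
    case 0
    show ?case
      using assms(1) by simp
  next
    case (Suc k)
    then show ?case by (simp only: funpow.simps comp_def prefix_morph_word)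
  qed
  from assms(2) show ?thesis
  proof (induction m rule: dec_induct)
    case (step m)
    then show ?case
      using suc prefix_order.trans by blast
  qed simp
qed

lemma less_power_self: "2 \<le> (q::nat) \<Longrightarrow> i < q ^ i"
  using less_exp[of i] power_mono[of 2 q i] by linarith

locale prolongable_uniform_morphism =
  fixes g :: "'a \<Rightarrow> 'a list" and q :: nat and s :: 'a
  assumes length_uniform: "length (g t) = q"
    and two_le_q: "2 \<le> q"
    and prolongable: "prefix [s] (g s)"
begin

text \<open>The word g^i(s) has length q^i > i, so this is a genuine letter of it.\<close>
definition fixed_point :: "nat \<Rightarrow> 'a" where
  "fixed_point i = (morph_word g ^^ i) [s] ! i"

lemma nth_funpow_eq_fixed_point:
  assumes "i < q ^ n"
  shows "(morph_word g ^^ n) [s] ! i = fixed_point i"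
proof -
  have nth_max: "(morph_word g ^^ m) [s] ! i = (morph_word g ^^ max n i) [s] ! i"
    if "m \<le> max n i" and "i < q ^ m" for m
    by (rule prefix_nth, rule prefix_funpow_morph_word[where g = g and s = s, OF prolongable that(1)])
      (simp add: length_funpow_morph_word_uniform[OF length_uniform] that(2))
  show ?thesis
    unfolding fixed_point_def
    using nth_max[OF _ assms] nth_max[OF _ less_power_self[OF two_le_q]] by simp
qed

lemma fixed_point_step: "fixed_point i = g (fixed_point (i div q)) ! (i mod q)"
proof -
  have i_less: "i < q ^ i" and div_less: "i div q < q ^ i"
    using less_power_self[OF two_le_q] div_le_dividend le_less_trans by blast+
  have i_less_Suc: "i < q ^ Suc i"
    using i_less power_increasing[of i "Suc i" q] two_le_q by linarith
  then have "(morph_word g ^^ Suc i) [s] ! i = fixed_point i"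
    by (rule nth_funpow_eq_fixed_point)
  then have "fixed_point i = morph_word g ((morph_word g ^^ i) [s]) ! i"
    by simp
  also have "\<dots> = g ((morph_word g ^^ i) [s] ! (i div q)) ! (i mod q)"
    using i_less_Suc by (simp add: morph_word_def nth_concat_map_uniform[OF length_uniform]
        length_funpow_morph_word_uniform[OF length_uniform])
  also have "(morph_word g ^^ i) [s] ! (i div q) = fixed_point (i div q)"
    using div_less by (rule nth_funpow_eq_fixed_point)
  finally show ?thesis .
qed

lemma fixed_point_in_alphabet:
  assumes "s \<in> Sig" and "\<And>t. t \<in> Sig \<Longrightarrow> set (g t) \<subseteq> Sig"
  shows "fixed_point i \<in> Sig"
proof (induction i rule: less_induct)
  case (less i)
  show ?case
  proof (cases "i = 0")
    case True
    then show ?thesis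
      using assms(1) by (simp add: fixed_point_def)
  next
    case False
    then have "fixed_point (i div q) \<in> Sig"
      using two_le_q by (intro less.IH) simp
    then have "set (g (fixed_point (i div q))) \<subseteq> Sig"
      by (rule assms(2))
    moreover have "i mod q < length (g (fixed_point (i div q)))"
      using length_uniform two_le_q by simp
    ultimately show ?thesis
      by (subst fixed_point_step) (blast intro: nth_mem)
  qed
qed

end

lemma mult_add_div_mod:
  fixes q j r d k :: nat
  assumes "0 < k"
  shows "(q * (k * j + r) + d) div k = q * j + (q * r + d) div k"
    and "(q * (k * j + r) + d) mod k = (q * r + d) mod k"
proof -
  have eq: "q * (k * j + r) + d = (q * r + d) + (q * j) * k"
    by (simp add: algebra_simps)
  show "(q * (k * j + r) + d) div k = q * j + (q * r + d) div k"
    unfolding eq using assms by (simp only: div_mult_self1 neq0_conv add.commute)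
  show "(q * (k * j + r) + d) mod k = (q * r + d) mod k"
    unfolding eq by (rule mod_mult_self1)
qed

lemma mult_add_div_less:
  fixes q r d k :: nat
  assumes "r < k" and "d < q"
  shows "(q * r + d) div k < q"
proof -
  have "q * r + d < q * Suc r"
    using assms(2) by simp
  also have "\<dots> \<le> q * k"
    using assms(1) by (intro mult_le_mono2) simp
  finally show ?thesis
    by (simp add: less_mult_imp_div_less mult.commute)
qed

text \<open>Here w = beta(x) for a k-uniform morphism beta.  The new state k * x(j) + r encodes the pair (x(j), r) of a letter of x and a position r < k in its block.\<close>
lemma q_automatic_uniform_morphic_image:
  fixes g :: "nat \<Rightarrow> nat list" and x :: "nat \<Rightarrow> nat" and beta :: "nat \<Rightarrow> 'b list"
  assumes "finite Sig" and g_uniform: "\<forall>s\<in>Sig. length (g s) = q \<and> set (g s) \<subseteq> Sig"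
    and x_in: "\<forall>i. x i \<in> Sig" and x_fix: "\<forall>i. x i = g (x (i div q)) ! (i mod q)"
    and "0 < q" and "0 < k" and w_eq: "\<forall>i. w i = beta (x (i div k)) ! (i mod k)"
  shows "q_automatic q w"
proof -
  define code where "code s r = k * s + r" for s r :: nat
  define y where "y i = code (x (i div k)) (i mod k)" for i
  define h where "h n = map (\<lambda>d. code (g (n div k) ! ((q * (n mod k) + d) div k))
      ((q * (n mod k) + d) mod k)) [0..<q]" for n
  define Sig' where "Sig' = case_prod code ` (Sig \<times> {..<k})"
  have code_div: "code s r div k = s" and code_mod: "code s r mod k = r" if "r < k" for s r
    using that by (simp_all add: code_def)
  have code_in: "code s r \<in> Sig'" if "s \<in> Sig" "r < k" for s r
    using that unfolding Sig'_def by force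
  have h_uniform: "\<forall>n\<in>Sig'. length (h n) = q \<and> set (h n) \<subseteq> Sig'"
  proof
    fix n assume "n \<in> Sig'"
    then obtain s r where s: "s \<in> Sig" and r: "r < k" and n: "n = code s r"
      unfolding Sig'_def by auto
    have g_s: "length (g s) = q" "set (g s) \<subseteq> Sig"
      using g_uniform s by simp_all
    have "code (g s ! ((q * r + d) div k)) ((q * r + d) mod k) \<in> Sig'" if "d < q" for d
    proof (rule code_in)
      show "g s ! ((q * r + d) div k) \<in> Sig"
        using g_s nth_mem mult_add_div_less[OF r that] by blast
      show "(q * r + d) mod k < k"
        using \<open>0 < k\<close> by simp
    qed
    then have "set (h n) \<subseteq> Sig'"
      by (auto simp: h_def n code_div code_mod r)
    then show "length (h n) = q \<and> set (h n) \<subseteq> Sig'"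
      by (simp add: h_def)
  qed
  have y_in: "\<forall>i. y i \<in> Sig'"
    using x_in \<open>0 < k\<close> by (simp add: y_def code_in)
  have y_fix: "y i = h (y (i div q)) ! (i mod q)" for i
  proof -
    define j r d where "j = i div q div k" and "r = i div q mod k" and "d = i mod q"
    define e where "e = (q * r + d) div k"
    have "r < k" and "d < q"
      using \<open>0 < k\<close> \<open>0 < q\<close> by (simp_all add: r_def d_def)
    have i: "i = q * (k * j + r) + d"
      by (simp add: j_def r_def d_def)
    have "e < q"
      unfolding e_def using \<open>r < k\<close> \<open>d < q\<close> by (rule mult_add_div_less)
    then have "(q * j + e) div q = j" and "(q * j + e) mod q = e"
      by simp_all
    then have "x (i div k) = g (x j) ! e"
      using x_fix mult_add_div_mod(1)[OF \<open>0 < k\<close>, of q j r d]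
      unfolding i e_def by metis
    moreover have "y (i div q) = code (x j) r"
      by (simp add: y_def j_def r_def)
    moreover have "i mod k = (q * r + d) mod k"
      unfolding i by (rule mult_add_div_mod(2)[OF \<open>0 < k\<close>])
    ultimately show ?thesis
      using \<open>d < q\<close> \<open>r < k\<close> by (simp add: y_def h_def code_div code_mod e_def d_def)
  qed
  have w_y: "\<forall>i. w i = beta (y i div k) ! (y i mod k)"
    using w_eq \<open>0 < k\<close> by (simp add: y_def code_div code_mod)
  show ?thesis
    unfolding q_automatic_def
  proof (intro exI conjI)
    show "finite Sig'"
      unfolding Sig'_def using \<open>finite Sig\<close> by simp
    show "\<forall>i. y i = h (y (i div q)) ! (i mod q)"
      using y_fix by blast
    show "\<forall>i. w i = (\<lambda>n. beta (n div k) ! (n mod k)) (y i)"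
      using w_y by simp
  qed (use h_uniform y_in in blast)+
qed

lemma limit_word_nth_prefix:
  assumes "is_limit_word h a w" and "prefix u ((morph_word h ^^ n) [a])" and "i < length u"
  shows "w i = u ! i"
  using assms prefix_length_le[OF assms(2)]
  unfolding is_limit_word_def by (simp add: prefix_nth)

fun psi_block :: "nat \<Rightarrow> letter list" where
  "psi_block n = (if n = 0 then [A,A,B,C] else [B,A,C,A])"

fun psi_block_morphism :: "nat \<Rightarrow> nat list" where
  "psi_block_morphism n = (if n = 0 then [0,0,1,0,1,1,1] else [1,0,0,1,1,1,0])"

lemma psi_block_conjugate:
  "morph_word psi (psi_block n) = concat (map psi_block (psi_block_morphism n))"
  by simp

lemma psi_limit_word_q_automatic:
  assumes lim: "is_limit_word psi a w" and psi_a: "psi a = concat (map psi_block (s # u))"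
    and s: "prefix [s] (psi_block_morphism s)"
  shows "q_automatic 7 w"
proof -
  interpret prolongable_uniform_morphism psi_block_morphism 7 s
    by unfold_locales (simp, simp, fact s)
  let ?g = "morph_word psi_block_morphism"
  have block_uniform: "length (psi_block t) = 4" for t
    by simp
  have w_eq: "w i = psi_block (fixed_point (i div 4)) ! (i mod 4)" for i
  proof -
    let ?u = "concat (map psi_block ((?g ^^ i) [s]))"
    have "(morph_word psi ^^ Suc i) [a] = (morph_word psi ^^ i) (psi a)"
      by (simp only: funpow_Suc_right comp_def morph_word_Cons morph_word_Nil append_Nil2)
    also have "\<dots> = concat (map psi_block ((?g ^^ i) (s # u)))"
      unfolding psi_a by (rule funpow_morph_word_conjugate[OF psi_block_conjugate])
    also have "\<dots> = ?u @ concat (map psi_block ((?g ^^ i) u))"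
      using funpow_morph_word_append[where h = psi_block_morphism and n = i and u = "[s]" and v = u]
      by simp
    finally have "prefix ?u ((morph_word psi ^^ Suc i) [a])"
      by (rule prefixI)
    moreover have "i < length ?u"
      using less_power_self[of 7 i]
      by (simp add: length_concat_map_uniform[OF block_uniform]
          length_funpow_morph_word_uniform[OF length_uniform])
    ultimately have "w i = ?u ! i"
      by (rule limit_word_nth_prefix[OF lim])
    also have "\<dots> = psi_block ((?g ^^ i) [s] ! (i div 4)) ! (i mod 4)"
      using \<open>i < length ?u\<close> by (simp add: nth_concat_map_uniform[OF block_uniform]
          length_concat_map_uniform[OF block_uniform])
    also have "(?g ^^ i) [s] ! (i div 4) = fixed_point (i div 4)"
      using less_power_self[of 7 i] by (intro nth_funpow_eq_fixed_point) simp
    finally show ?thesis .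
  qed
  have "s \<in> set (psi_block_morphism s)"
    using set_mono_prefix[OF s] by simp
  then have "s \<in> {0, 1}"
    by (cases "s = 0") simp_all
  then have fixed_point_in: "\<forall>i. fixed_point i \<in> {0, 1}"
    by (intro allI fixed_point_in_alphabet) auto
  have fixed_point_fix: "\<forall>i. fixed_point i = psi_block_morphism (fixed_point (i div 7)) ! (i mod 7)"
    using fixed_point_step by blast
  show ?thesis
    by (rule q_automatic_uniform_morphic_image[where Sig = "{0, 1}"
          and g = psi_block_morphism and x = fixed_point and k = 4 and beta = psi_block])
      (simp, simp, fact fixed_point_in, fact fixed_point_fix, simp, simp, use w_eq in blast)
qed

theorem mainTheorem5:
  shows "(\<forall>w. is_limit_word psi A w \<longrightarrow> q_automatic 7 w)
       \<and> (\<forall>w. is_limit_word psi B w \<longrightarrow> q_automatic 7 w)"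
proof (intro conjI allI impI)
  fix w assume "is_limit_word psi A w"
  then show "q_automatic 7 w"
    by (rule psi_limit_word_q_automatic[where s = 0 and u = "[]"]) simp_all
next
  fix w assume "is_limit_word psi B w"
  then show "q_automatic 7 w"
    by (rule psi_limit_word_q_automatic[where s = 1 and u = "[0]"]) simp_all
qed

end
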